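(* Let $\{A^i\}_{i=1}^N$ and $\{\tilde A^i\}_{i=1}^N$ be injective tuples of complex $n\times n$ matrices (not necessarily in canonical form). The following are equivalent: (i) for every even $L\in2\mathbb N$ there exists $\alpha_L\in\mathbb R$ with $\mathrm{tr}[A^{i_1}\cdots A^{i_L}]=e^{i\alpha_L}\mathrm{tr}[\tilde A^{i_1}\cdots\tilde A^{i_L}]$ for all $i_1,\dots,i_L$; (ii) there exist an invertible matrix $M\in\mathrm{GL}_n(\mathbb C)$ and $z\in\mathrm U(1)$ with $A^i=zM^{-1}\tilde A^iM$ for all $i$. Here $z$ is unique and $M$ is unique up to multiplication by a nonzero complex number. The same equivalence holds when $L$ in (i) ranges over odd integers $L\in2\mathbb N+1$ instead.
   Context: A tuple $\{A^i\}_{i=1}^N$ of complex $n\times n$ matrices is injective if there is a fixed $l\in\mathbb N$ such that the products $A^{i_1}\cdots A^{i_l}$ over all $(i_1,\dots,i_l)\in\{1,\dots,N\}^l$ span $\mathrm M_n(\mathbb C)$. It is in canonical form if $\sum_iA^iA^{i\dagger}=1_n$. *)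

theory Defs
  imports "Jordan_Normal_Form.Matrix"
begin

definition mat_tr :: "complex mat \<Rightarrow> complex" where
  "mat_tr X = (\<Sum>k<dim_row X. X $$ (k, k))"

definition word_prod :: "nat \<Rightarrow> (nat \<Rightarrow> complex mat) \<Rightarrow> nat list \<Rightarrow> complex mat" where
  "word_prod n A w = foldr (\<lambda>i P. A i * P) w (1\<^sub>m n)"

definition mat_cspan :: "nat \<Rightarrow> complex mat set \<Rightarrow> complex mat set" where
  "mat_cspan n S = {X. \<exists>F c. finite F \<and> F \<subseteq> S \<and>
      X = mat n n (\<lambda>(r, s). \<Sum>P\<in>F. c P * P $$ (r, s))}"

definition injective_tuple :: "nat \<Rightarrow> nat \<Rightarrow> (nat \<Rightarrow> complex mat) \<Rightarrow> bool" where
  "injective_tuple n N A \<longleftrightarrow>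
     (\<exists>l::nat. l \<ge> 1 \<and>
        mat_cspan n {word_prod n A w | w. length w = l \<and> set w \<subseteq> {..<N}} = carrier_mat n n)"

end

theory Submission
  imports Defs "Jordan_Normal_Form.Determinant"
begin

text \<open>Choose \<open>l\<close> such that for both tuples the words of every length \<open>m \<ge> l\<close> span \<open>M\<^sub>n\<close>. For such \<open>m\<close>
  the assignment \<open>\<Sum>\<^sub>w c\<^sub>w At\<^sup>w \<mapsto> \<Sum>\<^sub>w c\<^sub>w A\<^sup>w\<close> is a well-defined bijection \<open>transfer\<^sub>m\<close> of \<open>M\<^sub>n\<close>: the trace
  condition at one of the two consecutive lengths \<open>l + m\<close>, \<open>l + m + 1\<close> together with the
  nondegeneracy of the trace form kills its kernel. Multiplicativity of words makes \<open>transfer\<^sub>l\<^sub>+\<^sub>1 = z \<cdot> transfer\<^sub>l\<close> for a scalar \<open>z\<close>,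
  and \<open>A\<^sup>i transfer\<^sub>l(X) = z \<cdot> transfer\<^sub>l(At\<^sup>i X)\<close>. A column of the images of the matrix units is then
  an intertwiner \<open>S\<close> with \<open>A\<^sup>i S = z S At\<^sup>i\<close>, invertible because the \<open>At\<^sup>i\<close> generate \<open>M\<^sub>n\<close>, and the trace of
  the identity forces \<open>|z| = 1\<close>. Conversely a similarity multiplies the trace of a word of length \<open>L\<close>
  by \<open>z\<^sup>L\<close>. For uniqueness, the trace of the identity determines \<open>z\<^sup>l\<close> and \<open>z\<^sup>l\<^sup>+\<^sup>1\<close>, and \<open>M M'\<^sup>-\<^sup>1\<close>
  commutes with every \<open>At\<^sup>i\<close>, hence is a scalar.\<close>

section \<open>Words and linear combinations of matrices\<close>

definition words :: "nat \<Rightarrow> nat \<Rightarrow> nat list set" where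
  "words N m = {w. set w \<subseteq> {..<N} \<and> length w = m}"

lemma finite_words [simp]: "finite (words N m)"
  unfolding words_def by (rule finite_lists_length_eq) simp

lemma word_prod_Nil [simp]: "word_prod n B [] = 1\<^sub>m n"
  and word_prod_Cons [simp]: "word_prod n B (i # w) = B i * word_prod n B w"
  unfolding word_prod_def by auto

lemma word_prod_carrier:
  assumes "\<forall>i<N. B i \<in> carrier_mat n n" and "set w \<subseteq> {..<N}"
  shows "word_prod n B w \<in> carrier_mat n n"
  using assms(2) by (induct w) (use assms(1) in auto)

lemma word_prod_carrier_words:
  assumes "\<forall>i<N. B i \<in> carrier_mat n n" and "w \<in> words N m"
  shows "word_prod n B w \<in> carrier_mat n n"
  using assms word_prod_carrier unfolding words_def by blast

lemma word_prod_append: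
  assumes B: "\<forall>i<N. B i \<in> carrier_mat n n" and "set u \<subseteq> {..<N}" and w: "set w \<subseteq> {..<N}"
  shows "word_prod n B (u @ w) = word_prod n B u * word_prod n B w"
  using assms(2)
proof (induct u)
  case Nil
  then show ?case using word_prod_carrier[OF B w] by simp
next
  case (Cons i u)
  then have "B i \<in> carrier_mat n n" "word_prod n B u \<in> carrier_mat n n"
    using B word_prod_carrier by auto
  with Cons show ?case using word_prod_carrier[OF B w] by simp
qed

lemma bij_betw_append_words: "bij_betw (\<lambda>(u, w). u @ w) (words N a \<times> words N b) (words N (a + b))"
proof (rule bij_betwI')
  fix x y assume "x \<in> words N a \<times> words N b" "y \<in> words N a \<times> words N b"
  then show "((case x of (u, w) \<Rightarrow> u @ w) = (case y of (u, w) \<Rightarrow> u @ w)) = (x = y)"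
    by (cases x, cases y) (auto simp: words_def)
next
  fix v assume "v \<in> words N (a + b)"
  then have "(take a v, drop a v) \<in> words N a \<times> words N b"
    using set_take_subset set_drop_subset by (fastforce simp: words_def)
  then show "\<exists>x\<in>words N a \<times> words N b. v = (case x of (u, w) \<Rightarrow> u @ w)"
    by (intro bexI[of _ "(take a v, drop a v)"]) auto
qed (auto simp: words_def)

lemma index_mult_mat_sum:
  fixes X Y :: "'a :: comm_semiring_0 mat"
  assumes "X \<in> carrier_mat n n" "Y \<in> carrier_mat n n" "r < n" "s < n"
  shows "(X * Y) $$ (r, s) = (\<Sum>k<n. X $$ (r, k) * Y $$ (k, s))"
  using assms by (auto simp: scalar_prod_def intro!: sum.cong)

lemma smult_smult_mat: "a \<cdot>\<^sub>m (b \<cdot>\<^sub>m X) = (a * b :: 'a :: semigroup_mult) \<cdot>\<^sub>m X"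
  by (rule eq_matI) (auto simp: mult.assoc)

lemma one_smult_mat [simp]: "(1 :: 'a :: monoid_mult) \<cdot>\<^sub>m X = X"
  by (rule eq_matI) auto

definition mat_lincomb :: "nat \<Rightarrow> 'b set \<Rightarrow> ('b \<Rightarrow> complex) \<Rightarrow> ('b \<Rightarrow> complex mat) \<Rightarrow> complex mat" where
  "mat_lincomb n W c F = mat n n (\<lambda>(r, s). \<Sum>w\<in>W. c w * F w $$ (r, s))"

lemma mat_lincomb_carrier [simp]: "mat_lincomb n W c F \<in> carrier_mat n n"
  and mat_lincomb_dim [simp]: "dim_row (mat_lincomb n W c F) = n" "dim_col (mat_lincomb n W c F) = n"
  unfolding mat_lincomb_def by auto

lemma index_mat_lincomb [simp]:
  "r < n \<Longrightarrow> s < n \<Longrightarrow> mat_lincomb n W c F $$ (r, s) = (\<Sum>w\<in>W. c w * F w $$ (r, s))"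
  unfolding mat_lincomb_def by auto

lemma mat_lincomb_cong:
  "(\<And>w. w \<in> W \<Longrightarrow> c w = d w) \<Longrightarrow> (\<And>w. w \<in> W \<Longrightarrow> F w = G w) \<Longrightarrow>
    mat_lincomb n W c F = mat_lincomb n W d G"
  unfolding mat_lincomb_def by (intro cong_mat refl) (auto intro!: sum.cong)

lemma mat_lincomb_mult_right:
  assumes X: "X \<in> carrier_mat n n" and F: "\<forall>w\<in>W. F w \<in> carrier_mat n n"
  shows "mat_lincomb n W c F * X = mat_lincomb n W c (\<lambda>w. F w * X)"
proof (rule eq_matI)
  fix r s assume "r < dim_row (mat_lincomb n W c (\<lambda>w. F w * X))" "s < dim_col (mat_lincomb n W c (\<lambda>w. F w * X))"
  then have r: "r < n" and s: "s < n" by auto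
  have "(mat_lincomb n W c F * X) $$ (r, s) = (\<Sum>k<n. (\<Sum>w\<in>W. c w * F w $$ (r, k)) * X $$ (k, s))"
    using index_mult_mat_sum[OF mat_lincomb_carrier X r s] r by simp
  also have "\<dots> = (\<Sum>w\<in>W. c w * (\<Sum>k<n. F w $$ (r, k) * X $$ (k, s)))"
    by (simp add: sum_distrib_right sum_distrib_left mult.assoc sum.swap[of _ W])
  also have "\<dots> = mat_lincomb n W c (\<lambda>w. F w * X) $$ (r, s)"
    using r s F index_mult_mat_sum[OF _ X r s] by simp
  finally show "(mat_lincomb n W c F * X) $$ (r, s) = mat_lincomb n W c (\<lambda>w. F w * X) $$ (r, s)" .
qed (use X in auto)

lemma mat_lincomb_mult_left:
  assumes X: "X \<in> carrier_mat n n" and F: "\<forall>w\<in>W. F w \<in> carrier_mat n n"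
  shows "X * mat_lincomb n W c F = mat_lincomb n W c (\<lambda>w. X * F w)"
proof (rule eq_matI)
  fix r s assume "r < dim_row (mat_lincomb n W c (\<lambda>w. X * F w))" "s < dim_col (mat_lincomb n W c (\<lambda>w. X * F w))"
  then have r: "r < n" and s: "s < n" by auto
  have "(X * mat_lincomb n W c F) $$ (r, s) = (\<Sum>k<n. X $$ (r, k) * (\<Sum>w\<in>W. c w * F w $$ (k, s)))"
    using index_mult_mat_sum[OF X mat_lincomb_carrier r s] s by simp
  also have "\<dots> = (\<Sum>w\<in>W. c w * (\<Sum>k<n. X $$ (r, k) * F w $$ (k, s)))"
    by (simp add: sum_distrib_right sum_distrib_left mult.assoc mult.left_commute sum.swap[of _ W])
  also have "\<dots> = mat_lincomb n W c (\<lambda>w. X * F w) $$ (r, s)"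
    using r s F index_mult_mat_sum[OF X _ r s] by simp
  finally show "(X * mat_lincomb n W c F) $$ (r, s) = mat_lincomb n W c (\<lambda>w. X * F w) $$ (r, s)" .
qed (use X in auto)

lemma mat_lincomb_lincomb:
  "mat_lincomb n W a (\<lambda>w. mat_lincomb n V (e w) F) = mat_lincomb n V (\<lambda>v. \<Sum>w\<in>W. a w * e w v) F"
proof (rule eq_matI)
  fix r s assume "r < dim_row (mat_lincomb n V (\<lambda>v. \<Sum>w\<in>W. a w * e w v) F)"
    "s < dim_col (mat_lincomb n V (\<lambda>v. \<Sum>w\<in>W. a w * e w v) F)"
  then have "r < n" "s < n" by auto
  then show "mat_lincomb n W a (\<lambda>w. mat_lincomb n V (e w) F) $$ (r, s) =
      mat_lincomb n V (\<lambda>v. \<Sum>w\<in>W. a w * e w v) F $$ (r, s)"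
    by (simp add: sum_distrib_left sum_distrib_right mult.assoc sum.swap[of _ W])
qed auto

lemma mat_lincomb_diff: "mat_lincomb n W c F - mat_lincomb n W d F = mat_lincomb n W (\<lambda>w. c w - d w) F"
  by (rule eq_matI) (auto simp: sum_subtractf left_diff_distrib)

lemma mat_lincomb_smult:
  "\<forall>w\<in>W. F w \<in> carrier_mat n n \<Longrightarrow> mat_lincomb n W c (\<lambda>w. k \<cdot>\<^sub>m F w) = k \<cdot>\<^sub>m mat_lincomb n W c F"
  by (intro eq_matI) (auto simp: sum_distrib_left mult_ac intro!: sum.cong)

lemma mat_lincomb_delta:
  assumes "finite W" "w \<in> W" "F w \<in> carrier_mat n n"
  shows "mat_lincomb n W (\<lambda>u. if u = w then 1 else 0) F = F w"
proof (rule eq_matI)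
  fix r s assume "r < dim_row (F w)" "s < dim_col (F w)"
  then show "mat_lincomb n W (\<lambda>u. if u = w then 1 else 0) F $$ (r, s) = F w $$ (r, s)"
    using assms by (simp add: if_distrib[of "\<lambda>x. x * _"] cong: if_cong)
qed (use assms in auto)

lemma mat_tr_mat_lincomb:
  assumes "\<forall>w\<in>W. F w \<in> carrier_mat n n"
  shows "mat_tr (mat_lincomb n W c F) = (\<Sum>w\<in>W. c w * mat_tr (F w))"
proof -
  have "mat_tr (mat_lincomb n W c F) = (\<Sum>k<n. \<Sum>w\<in>W. c w * F w $$ (k, k))"
    unfolding mat_tr_def by simp
  also have "\<dots> = (\<Sum>w\<in>W. \<Sum>k<n. c w * F w $$ (k, k))" by (rule sum.swap)
  also have "\<dots> = (\<Sum>w\<in>W. c w * mat_tr (F w))"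
    unfolding mat_tr_def using assms by (auto simp: sum_distrib_left intro!: sum.cong)
  finally show ?thesis .
qed

definition word_comb :: "nat \<Rightarrow> nat \<Rightarrow> (nat \<Rightarrow> complex mat) \<Rightarrow> nat \<Rightarrow> (nat list \<Rightarrow> complex) \<Rightarrow> complex mat" where
  "word_comb n N B m c = mat_lincomb n (words N m) c (word_prod n B)"

lemma word_comb_carrier [simp]: "word_comb n N B m c \<in> carrier_mat n n"
  and word_comb_dim [simp]: "dim_row (word_comb n N B m c) = n" "dim_col (word_comb n N B m c) = n"
  unfolding word_comb_def by auto

lemma word_prod_eq_word_comb:
  assumes "\<forall>i<N. B i \<in> carrier_mat n n" and "w \<in> words N m"
  shows "word_prod n B w = word_comb n N B m (\<lambda>u. if u = w then 1 else 0)"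
  unfolding word_comb_def using assms by (simp add: mat_lincomb_delta word_prod_carrier_words)

lemma word_comb_zero: "word_comb n N B m (\<lambda>_. 0) = 0\<^sub>m n n"
  unfolding word_comb_def by (rule eq_matI) auto

lemma word_comb_mult:
  assumes B: "\<forall>i<N. B i \<in> carrier_mat n n"
  shows "word_comb n N B a c * word_comb n N B b d = word_comb n N B (a + b) (\<lambda>v. c (take a v) * d (drop a v))"
proof -
  have carrier: "\<And>m. \<forall>w\<in>words N m. word_prod n B w \<in> carrier_mat n n"
    using word_prod_carrier_words[OF B] by blast
  have "word_comb n N B a c * word_comb n N B b d
      = mat_lincomb n (words N a) c (\<lambda>u. mat_lincomb n (words N b) d (\<lambda>w. word_prod n B u * word_prod n B w))"
    unfolding word_comb_def mat_lincomb_mult_right[OF mat_lincomb_carrier carrier]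
    by (intro mat_lincomb_cong refl mat_lincomb_mult_left) (use carrier in auto)
  also have "\<dots> = mat_lincomb n (words N a) c (\<lambda>u. mat_lincomb n (words N b) d (\<lambda>w. word_prod n B (u @ w)))"
    by (intro mat_lincomb_cong refl) (use word_prod_append[OF B] in \<open>auto simp: words_def\<close>)
  also have "\<dots> = word_comb n N B (a + b) (\<lambda>v. c (take a v) * d (drop a v))"
  proof (rule eq_matI)
    fix r s assume "r < dim_row (word_comb n N B (a + b) (\<lambda>v. c (take a v) * d (drop a v)))"
      "s < dim_col (word_comb n N B (a + b) (\<lambda>v. c (take a v) * d (drop a v)))"
    then have r: "r < n" and s: "s < n" by auto
    let ?g = "\<lambda>v. c (take a v) * d (drop a v) * word_prod n B v $$ (r, s)"
    have "mat_lincomb n (words N a) c (\<lambda>u. mat_lincomb n (words N b) d (\<lambda>w. word_prod n B (u @ w))) $$ (r, s)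
        = (\<Sum>x\<in>words N a \<times> words N b. ?g ((\<lambda>(u, w). u @ w) x))"
      using r s by (auto simp: sum_distrib_left sum.cartesian_product words_def intro!: sum.cong)
    also have "\<dots> = (\<Sum>v\<in>words N (a + b). ?g v)"
      by (rule sum.reindex_bij_betw[OF bij_betw_append_words])
    finally show "mat_lincomb n (words N a) c (\<lambda>u. mat_lincomb n (words N b) d (\<lambda>w. word_prod n B (u @ w))) $$ (r, s)
       = word_comb n N B (a + b) (\<lambda>v. c (take a v) * d (drop a v)) $$ (r, s)"
      unfolding word_comb_def using r s by simp
  qed auto
  finally show ?thesis .
qed

lemma mat_tr_word_comb:
  assumes "\<forall>i<N. B i \<in> carrier_mat n n"
  shows "mat_tr (word_comb n N B m c) = (\<Sum>w\<in>words N m. c w * mat_tr (word_prod n B w))"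
  unfolding word_comb_def by (rule mat_tr_mat_lincomb) (use word_prod_carrier_words[OF assms] in auto)

lemma mat_tr_word_comb_scaled:
  assumes "\<forall>i<N. B i \<in> carrier_mat n n" and "\<forall>i<N. C i \<in> carrier_mat n n"
    and "\<forall>w\<in>words N m. mat_tr (word_prod n C w) = \<kappa> * mat_tr (word_prod n B w)"
  shows "mat_tr (word_comb n N C m c) = \<kappa> * mat_tr (word_comb n N B m c)"
  using assms by (simp add: mat_tr_word_comb sum_distrib_left mult.left_commute)

section \<open>Trace and matrix units\<close>

lemma mat_tr_mult_comm:
  assumes "X \<in> carrier_mat n n" "Y \<in> carrier_mat n n"
  shows "mat_tr (X * Y) = mat_tr (Y * X)"
proof -
  have "mat_tr (X * Y) = (\<Sum>k<n. \<Sum>j<n. X $$ (k, j) * Y $$ (j, k))"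
    unfolding mat_tr_def using assms by (auto intro!: sum.cong simp: scalar_prod_def)
  also have "\<dots> = (\<Sum>j<n. \<Sum>k<n. Y $$ (j, k) * X $$ (k, j))"
    by (subst sum.swap) (simp add: mult.commute)
  also have "\<dots> = mat_tr (Y * X)"
    unfolding mat_tr_def using assms by (auto intro!: sum.cong simp: scalar_prod_def)
  finally show ?thesis .
qed

lemma mat_tr_similar:
  assumes "W \<in> carrier_mat n n" "M \<in> carrier_mat n n" "Minv \<in> carrier_mat n n" "M * Minv = 1\<^sub>m n"
  shows "mat_tr (Minv * W * M) = mat_tr W"
proof -
  have "mat_tr (Minv * W * M) = mat_tr (M * (Minv * W))"
    by (rule mat_tr_mult_comm) (use assms in auto)
  also have "M * (Minv * W) = (M * Minv) * W" by (rule assoc_mult_mat[symmetric]) (use assms in auto)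
  finally show ?thesis using assms by simp
qed

lemma mat_tr_smult: "X \<in> carrier_mat n n \<Longrightarrow> mat_tr (k \<cdot>\<^sub>m X) = k * mat_tr X"
  unfolding mat_tr_def by (auto simp: sum_distrib_left intro!: sum.cong)

lemma mat_tr_one_mat [simp]: "mat_tr (1\<^sub>m n) = of_nat n"
  unfolding mat_tr_def by simp

lemma mat_tr_zero_mat [simp]: "mat_tr (0\<^sub>m n n) = 0"
  unfolding mat_tr_def by simp

definition unit_mat :: "nat \<Rightarrow> nat \<Rightarrow> nat \<Rightarrow> complex mat" where
  "unit_mat n a b = mat n n (\<lambda>(i, j). if i = a \<and> j = b then 1 else 0)"

lemma unit_mat_carrier [simp]: "unit_mat n a b \<in> carrier_mat n n"
  and unit_mat_dim [simp]: "dim_row (unit_mat n a b) = n" "dim_col (unit_mat n a b) = n"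
  unfolding unit_mat_def by simp_all

lemma index_mult_unit_mat:
  assumes Q: "Q \<in> carrier_mat n n" and a: "a < n" and r: "r < n" and s: "s < n"
  shows "(Q * unit_mat n a b) $$ (r, s) = (if s = b then Q $$ (r, a) else 0)"
proof -
  have "(Q * unit_mat n a b) $$ (r, s) = (\<Sum>j<n. if j = a then (if s = b then Q $$ (r, j) else 0) else 0)"
    unfolding index_mult_mat_sum[OF Q unit_mat_carrier r s] using s by (intro sum.cong) (auto simp: unit_mat_def)
  then show ?thesis using a by simp
qed

lemma index_unit_mat_mult:
  assumes Q: "Q \<in> carrier_mat n n" and b: "b < n" and r: "r < n" and s: "s < n"
  shows "(unit_mat n a b * Q) $$ (r, s) = (if r = a then Q $$ (b, s) else 0)"
proof -
  have "(unit_mat n a b * Q) $$ (r, s) = (\<Sum>j<n. if j = b then (if r = a then Q $$ (j, s) else 0) else 0)"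
    unfolding index_mult_mat_sum[OF unit_mat_carrier Q r s] using r by (intro sum.cong) (auto simp: unit_mat_def)
  then show ?thesis using b by simp
qed

lemma mat_tr_unit_mat_mult:
  assumes Y: "Y \<in> carrier_mat n n" and a: "a < n" and b: "b < n"
  shows "mat_tr (unit_mat n a b * Y) = Y $$ (b, a)"
proof -
  have "mat_tr (unit_mat n a b * Y) = (\<Sum>k<n. if k = a then Y $$ (b, k) else 0)"
    unfolding mat_tr_def using Y b index_unit_mat_mult[OF Y b] by (intro sum.cong) auto
  then show ?thesis using a by simp
qed

lemma trace_form_nondegenerate:
  assumes Y: "Y \<in> carrier_mat n n" and orth: "\<And>X. X \<in> carrier_mat n n \<Longrightarrow> mat_tr (X * Y) = 0"
  shows "Y = 0\<^sub>m n n"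
proof (rule eq_matI)
  fix r s assume "r < dim_row (0\<^sub>m n n :: complex mat)" "s < dim_col (0\<^sub>m n n :: complex mat)"
  then show "Y $$ (r, s) = 0\<^sub>m n n $$ (r, s)"
    using mat_tr_unit_mat_mult[OF Y, of s r] orth[OF unit_mat_carrier] by simp
qed (use Y in auto)

lemma commuting_mat_is_scalar:
  fixes Q :: "complex mat"
  assumes n: "n \<ge> 1" and Q: "Q \<in> carrier_mat n n"
    and comm: "\<And>X. X \<in> carrier_mat n n \<Longrightarrow> Q * X = X * Q"
  shows "Q = Q $$ (0, 0) \<cdot>\<^sub>m 1\<^sub>m n"
proof (rule eq_matI)
  fix r s assume "r < dim_row (Q $$ (0, 0) \<cdot>\<^sub>m 1\<^sub>m n)" "s < dim_col (Q $$ (0, 0) \<cdot>\<^sub>m 1\<^sub>m n)"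
  then have r: "r < n" and s: "s < n" by auto
  have n0: "0 < n" using n by simp
  show "Q $$ (r, s) = (Q $$ (0, 0) \<cdot>\<^sub>m 1\<^sub>m n) $$ (r, s)"
  proof (cases "r = s")
    case True
    have "(Q * unit_mat n 0 r) $$ (0, r) = (unit_mat n 0 r * Q) $$ (0, r)"
      using comm[OF unit_mat_carrier] by simp
    then show ?thesis
      using True r index_mult_unit_mat[OF Q n0 n0 r] index_unit_mat_mult[OF Q r n0 r] by simp
  next
    case False
    have "(Q * unit_mat n s s) $$ (r, s) = (unit_mat n s s * Q) $$ (r, s)"
      using comm[OF unit_mat_carrier] by simp
    then show ?thesis
      using False r s index_mult_unit_mat[OF Q s r s] index_unit_mat_mult[OF Q s r s] by simp
  qed
qed (use Q in auto)

lemma mult_unit_mat_eq_lincomb: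
  assumes C: "C \<in> carrier_mat n n" and s: "s < n"
  shows "C * unit_mat n s b = mat_lincomb n {..<n} (\<lambda>k. C $$ (k, s)) (\<lambda>k. unit_mat n k b)"
proof (rule eq_matI)
  fix p q assume "p < dim_row (mat_lincomb n {..<n} (\<lambda>k. C $$ (k, s)) (\<lambda>k. unit_mat n k b))"
    "q < dim_col (mat_lincomb n {..<n} (\<lambda>k. C $$ (k, s)) (\<lambda>k. unit_mat n k b))"
  then have p: "p < n" and q: "q < n" by auto
  have "mat_lincomb n {..<n} (\<lambda>k. C $$ (k, s)) (\<lambda>k. unit_mat n k b) $$ (p, q)
      = (\<Sum>k<n. if k = p then (if q = b then C $$ (k, s) else 0) else 0)"
    unfolding index_mat_lincomb[OF p q] using p q by (intro sum.cong) (auto simp: unit_mat_def)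
  then show "(C * unit_mat n s b) $$ (p, q) = mat_lincomb n {..<n} (\<lambda>k. C $$ (k, s)) (\<lambda>k. unit_mat n k b) $$ (p, q)"
    using index_mult_unit_mat[OF C s p q] p by simp
qed (use C in auto)

section \<open>Spanning tuples and intertwiners\<close>

definition spans_words :: "nat \<Rightarrow> nat \<Rightarrow> (nat \<Rightarrow> complex mat) \<Rightarrow> nat \<Rightarrow> bool" where
  "spans_words n N B m \<longleftrightarrow> (\<forall>X\<in>carrier_mat n n. \<exists>c. X = word_comb n N B m c)"

lemma injective_tuple_spans_words:
  assumes B: "\<forall>i<N. B i \<in> carrier_mat n n" and inj: "injective_tuple n N B"
  shows "\<exists>l\<ge>1. spans_words n N B l"
proof -
  obtain l where l: "l \<ge> 1"
    and span: "mat_cspan n {word_prod n B w | w. length w = l \<and> set w \<subseteq> {..<N}} = carrier_mat n n"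
    using inj unfolding injective_tuple_def by blast
  have "\<exists>c. X = word_comb n N B l c" if X: "X \<in> carrier_mat n n" for X
  proof -
    have "{word_prod n B w | w. length w = l \<and> set w \<subseteq> {..<N}} = word_prod n B ` words N l"
      by (auto simp: words_def)
    with span X have "X \<in> mat_cspan n (word_prod n B ` words N l)" by simp
    then obtain F c where F: "finite F" "F \<subseteq> word_prod n B ` words N l"
      and XF: "X = mat n n (\<lambda>(r, s). \<Sum>P\<in>F. c P * P $$ (r, s))"
      unfolding mat_cspan_def by blast
    obtain rep where rep: "\<And>P. P \<in> F \<Longrightarrow> rep P \<in> words N l \<and> P = word_prod n B (rep P)"
      using F(2) by (metis f_inv_into_f inv_into_into subsetD)
    have "X = mat_lincomb n F c (\<lambda>P. P)" unfolding XF mat_lincomb_def by simp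
    also have "\<dots> = mat_lincomb n F c (\<lambda>P. word_comb n N B l (\<lambda>u. if u = rep P then 1 else 0))"
    proof (intro mat_lincomb_cong refl)
      fix P assume "P \<in> F"
      then have "rep P \<in> words N l \<and> P = word_prod n B (rep P)" by (rule rep)
      then show "P = word_comb n N B l (\<lambda>u. if u = rep P then 1 else 0)"
        using word_prod_eq_word_comb[OF B] by metis
    qed
    also have "\<dots> = word_comb n N B l (\<lambda>v. \<Sum>P\<in>F. c P * (if v = rep P then 1 else 0))"
      unfolding word_comb_def by (rule mat_lincomb_lincomb)
    finally show ?thesis by blast
  qed
  with l show ?thesis unfolding spans_words_def by blast
qed

lemma mult_word_comb:
  assumes B: "\<forall>i<N. B i \<in> carrier_mat n n" and i: "i < N"
  shows "B i * word_comb n N B m d = word_comb n N B (Suc m) (\<lambda>v. (if take 1 v = [i] then 1 else 0) * d (drop 1 v))"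
proof -
  have "[i] \<in> words N 1" using i by (simp add: words_def)
  then have "B i = word_comb n N B 1 (\<lambda>u. if u = [i] then 1 else 0)"
    using word_prod_eq_word_comb[OF B] B i by fastforce
  then show ?thesis using word_comb_mult[OF B] by simp
qed

lemma spans_words_Suc:
  assumes B: "\<forall>i<N. B i \<in> carrier_mat n n" and span: "spans_words n N B l" and l: "l \<ge> 1"
  shows "spans_words n N B (Suc l)"
  unfolding spans_words_def
proof
  fix X :: "complex mat" assume X: "X \<in> carrier_mat n n"
  obtain c where c: "1\<^sub>m n = word_comb n N B l c"
    using span one_carrier_mat unfolding spans_words_def by blast
  have words_l: "\<forall>w\<in>words N l. word_prod n B w \<in> carrier_mat n n"
    using word_prod_carrier_words[OF B] by blast
  have "\<exists>d. word_prod n B w * X = word_comb n N B (Suc l) d" if w: "w \<in> words N l" for w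
  proof -
    obtain i u where w_eq: "w = i # u" using w l by (cases w) (auto simp: words_def)
    then have i: "i < N" and u: "set u \<subseteq> {..<N}" using w by (auto simp: words_def)
    have "word_prod n B u * X \<in> carrier_mat n n" using word_prod_carrier[OF B u] X by simp
    then obtain d where d: "word_prod n B u * X = word_comb n N B l d"
      using span unfolding spans_words_def by blast
    have "word_prod n B w * X = B i * (word_prod n B u * X)"
      using w_eq B i word_prod_carrier[OF B u] X by (simp add: assoc_mult_mat[of _ n n _ n _ n])
    then show ?thesis unfolding d mult_word_comb[OF B i] by blast
  qed
  then obtain d where d: "\<And>w. w \<in> words N l \<Longrightarrow> word_prod n B w * X = word_comb n N B (Suc l) (d w)"
    by metis
  have "X = 1\<^sub>m n * X" using X by simp
  also have "\<dots> = mat_lincomb n (words N l) c (\<lambda>w. word_prod n B w * X)"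
    unfolding c word_comb_def by (rule mat_lincomb_mult_right[OF X words_l])
  also have "\<dots> = mat_lincomb n (words N l) c (\<lambda>w. word_comb n N B (Suc l) (d w))"
    by (intro mat_lincomb_cong refl d)
  also have "\<dots> = word_comb n N B (Suc l) (\<lambda>v. \<Sum>w\<in>words N l. c w * d w v)"
    unfolding word_comb_def by (rule mat_lincomb_lincomb)
  finally show "\<exists>c. X = word_comb n N B (Suc l) c" by blast
qed

lemma spans_words_mono:
  assumes B: "\<forall>i<N. B i \<in> carrier_mat n n" and "spans_words n N B l" and "l \<ge> 1" and "l \<le> m"
  shows "spans_words n N B m"
  using assms(4,2,3) by (induct m rule: dec_induct) (auto intro: spans_words_Suc[OF B])

lemma commute_word_prod:
  assumes B: "\<forall>i<N. B i \<in> carrier_mat n n" and Q: "Q \<in> carrier_mat n n"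
    and comm: "\<forall>i<N. B i * Q = Q * B i" and w: "set w \<subseteq> {..<N}"
  shows "word_prod n B w * Q = Q * word_prod n B w"
  using w
proof (induct w)
  case (Cons i w)
  then have i: "i < N" and w: "set w \<subseteq> {..<N}" by auto
  have Bi: "B i \<in> carrier_mat n n" using B i by auto
  have W: "word_prod n B w \<in> carrier_mat n n" using word_prod_carrier[OF B w] .
  have "word_prod n B (i # w) * Q = B i * (word_prod n B w * Q)"
    using Bi W Q by simp
  also have "\<dots> = (B i * Q) * word_prod n B w"
    using Bi W Q Cons(1)[OF w] by simp
  also have "\<dots> = Q * word_prod n B (i # w)"
    using Bi W Q comm i by simp
  finally show ?case .
qed (use Q in simp)

lemma commute_tuple_imp_scalar:
  assumes n: "n \<ge> 1" and B: "\<forall>i<N. B i \<in> carrier_mat n n" and Q: "Q \<in> carrier_mat n n"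
    and comm: "\<forall>i<N. B i * Q = Q * B i" and span: "spans_words n N B m"
  shows "Q = Q $$ (0, 0) \<cdot>\<^sub>m 1\<^sub>m n"
proof (rule commuting_mat_is_scalar[OF n Q])
  fix X :: "complex mat" assume "X \<in> carrier_mat n n"
  then obtain c where c: "X = word_comb n N B m c" using span unfolding spans_words_def by blast
  have words_m: "\<forall>w\<in>words N m. word_prod n B w \<in> carrier_mat n n"
    using word_prod_carrier_words[OF B] by blast
  have "Q * X = mat_lincomb n (words N m) c (\<lambda>w. Q * word_prod n B w)"
    unfolding c word_comb_def by (rule mat_lincomb_mult_left[OF Q words_m])
  also have "\<dots> = mat_lincomb n (words N m) c (\<lambda>w. word_prod n B w * Q)"
    by (intro mat_lincomb_cong refl) (use commute_word_prod[OF B Q comm] in \<open>auto simp: words_def\<close>)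
  also have "\<dots> = X * Q"
    unfolding c word_comb_def by (rule mat_lincomb_mult_right[symmetric, OF Q words_m])
  finally show "Q * X = X * Q" .
qed

lemma intertwine_word_prod:
  assumes B: "\<forall>i<N. B i \<in> carrier_mat n n" and C: "\<forall>i<N. C i \<in> carrier_mat n n"
    and S: "S \<in> carrier_mat n n" and inter: "\<forall>i<N. B i * S = z \<cdot>\<^sub>m (S * C i)"
    and w: "set w \<subseteq> {..<N}"
  shows "word_prod n B w * S = z ^ length w \<cdot>\<^sub>m (S * word_prod n C w)"
  using w
proof (induct w)
  case (Cons i w)
  then have i: "i < N" and w: "set w \<subseteq> {..<N}" by auto
  have Bi: "B i \<in> carrier_mat n n" and Ci: "C i \<in> carrier_mat n n" using B C i by auto
  have Bw: "word_prod n B w \<in> carrier_mat n n" and Cw: "word_prod n C w \<in> carrier_mat n n"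
    using word_prod_carrier[OF B w] word_prod_carrier[OF C w] .
  have "word_prod n B (i # w) * S = B i * (word_prod n B w * S)"
    using Bi Bw S by simp
  also have "\<dots> = z ^ length w \<cdot>\<^sub>m (B i * (S * word_prod n C w))"
    unfolding Cons(1)[OF w] by (rule mult_smult_distrib[OF Bi mult_carrier_mat[OF S Cw]])
  also have "B i * (S * word_prod n C w) = (z \<cdot>\<^sub>m (S * C i)) * word_prod n C w"
    using Bi S Cw inter i by (simp flip: assoc_mult_mat[of _ n n _ n _ n])
  also have "\<dots> = z \<cdot>\<^sub>m (S * word_prod n C (i # w))"
    using S Ci Cw by (simp add: mult_smult_assoc_mat[OF mult_carrier_mat[OF S Ci] Cw])
  finally show ?case by (simp add: smult_smult_mat mult.commute)
qed (use S in simp)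

lemma intertwine_word_comb:
  assumes B: "\<forall>i<N. B i \<in> carrier_mat n n" and C: "\<forall>i<N. C i \<in> carrier_mat n n"
    and S: "S \<in> carrier_mat n n" and inter: "\<forall>i<N. B i * S = z \<cdot>\<^sub>m (S * C i)"
  shows "word_comb n N B m c * S = z ^ m \<cdot>\<^sub>m (S * word_comb n N C m c)"
proof -
  have words_B: "\<forall>w\<in>words N m. word_prod n B w \<in> carrier_mat n n"
    and words_C: "\<forall>w\<in>words N m. word_prod n C w \<in> carrier_mat n n"
    using word_prod_carrier_words[OF B] word_prod_carrier_words[OF C] by blast+
  have "word_comb n N B m c * S = mat_lincomb n (words N m) c (\<lambda>w. word_prod n B w * S)"
    unfolding word_comb_def by (rule mat_lincomb_mult_right[OF S words_B])
  also have "\<dots> = mat_lincomb n (words N m) c (\<lambda>w. z ^ m \<cdot>\<^sub>m (S * word_prod n C w))"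
    by (intro mat_lincomb_cong refl) (auto simp: intertwine_word_prod[OF B C S inter] words_def)
  also have "\<dots> = z ^ m \<cdot>\<^sub>m (S * word_comb n N C m c)"
    unfolding word_comb_def mat_lincomb_mult_left[OF S words_C]
    by (rule mat_lincomb_smult) (use S words_C in auto)
  finally show ?thesis .
qed

text \<open>The kernel of an intertwiner is invariant under the algebra generated by the \<open>C\<close>-tuple,
  which is all of \<open>M\<^sub>n\<close>; hence a nonzero intertwiner is injective.\<close>

lemma intertwiner_invertible:
  assumes B: "\<forall>i<N. B i \<in> carrier_mat n n" and C: "\<forall>i<N. C i \<in> carrier_mat n n"
    and S: "S \<in> carrier_mat n n" and inter: "\<forall>i<N. B i * S = z \<cdot>\<^sub>m (S * C i)"
    and z: "z \<noteq> 0" and S_nonzero: "S \<noteq> 0\<^sub>m n n" and span: "spans_words n N C m"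
  shows "\<exists>T\<in>carrier_mat n n. T * S = 1\<^sub>m n \<and> S * T = 1\<^sub>m n"
proof -
  obtain a b where a: "a < n" and b: "b < n" and Sab: "S $$ (a, b) \<noteq> 0"
    using S_nonzero S by (metis carrier_matD eq_matI index_zero_mat(1,2,3))
  have "x = 0\<^sub>v n" if x: "x \<in> carrier_vec n" and Sx: "S *\<^sub>v x = 0\<^sub>v n" for x
  proof (rule ccontr)
    assume "x \<noteq> 0\<^sub>v n"
    then obtain j where j: "j < n" "x $ j \<noteq> 0"
      using x by (metis eq_vecI carrier_vecD index_zero_vec)
    obtain c where c: "unit_mat n b j = word_comb n N C m c"
      using span unit_mat_carrier unfolding spans_words_def by blast
    have "(z ^ m \<cdot>\<^sub>m (S * unit_mat n b j)) *\<^sub>v x = word_comb n N B m c *\<^sub>v (S *\<^sub>v x)"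
      unfolding c intertwine_word_comb[OF B C S inter, symmetric]
      by (rule assoc_mult_mat_vec[OF word_comb_carrier S x])
    also have "\<dots> = 0\<^sub>v n" unfolding Sx by (rule eq_vecI) (auto simp: scalar_prod_def)
    finally have "((z ^ m \<cdot>\<^sub>m (S * unit_mat n b j)) *\<^sub>v x) $ a = 0" using a by simp
    moreover have "((z ^ m \<cdot>\<^sub>m (S * unit_mat n b j)) *\<^sub>v x) $ a
        = (\<Sum>q<n. (z ^ m \<cdot>\<^sub>m (S * unit_mat n b j)) $$ (a, q) * x $ q)"
      using a x S by (simp add: scalar_prod_def atLeast0LessThan)
    moreover have "\<dots> = (\<Sum>q<n. if q = j then z ^ m * S $$ (a, b) * x $ j else 0)"
      by (intro sum.cong refl) (use a S index_mult_unit_mat[OF S b a] in auto)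
    ultimately show False using j z Sab by simp
  qed
  then have "det S \<noteq> 0" using det_0_iff_vec_prod_zero_field[OF S] by blast
  from det_non_zero_imp_unit[OF S this, of "()"] show ?thesis
    unfolding Units_def by (simp add: ring_mat_simps)
qed

text \<open>Skolem--Noether type construction: a column of the images of the matrix units \<open>E\<^sub>s\<^sub>0\<close>
  under an equivariant linear map yields an intertwiner.\<close>

lemma intertwiner_of_equivariant_map:
  fixes f :: "complex mat \<Rightarrow> complex mat"
  assumes B: "B \<in> carrier_mat n n" and C: "C \<in> carrier_mat n n" and t: "t < n"
    and f_carrier: "\<And>X. X \<in> carrier_mat n n \<Longrightarrow> f X \<in> carrier_mat n n"
    and f_linear: "\<And>a. f (mat_lincomb n {..<n} a (\<lambda>k. unit_mat n k 0)) = mat_lincomb n {..<n} a (\<lambda>k. f (unit_mat n k 0))"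
    and f_equivariant: "\<And>X. X \<in> carrier_mat n n \<Longrightarrow> B * f X = z \<cdot>\<^sub>m f (C * X)"
  defines "S \<equiv> mat n n (\<lambda>(r, s). f (unit_mat n s 0) $$ (r, t))"
  shows "B * S = z \<cdot>\<^sub>m (S * C)"
proof (rule eq_matI)
  fix r s assume "r < dim_row (z \<cdot>\<^sub>m (S * C))" "s < dim_col (z \<cdot>\<^sub>m (S * C))"
  then have r: "r < n" and s: "s < n" using C by (auto simp: S_def)
  have S: "S \<in> carrier_mat n n" by (simp add: S_def)
  have "(B * S) $$ (r, s) = (B * f (unit_mat n s 0)) $$ (r, t)"
    using index_mult_mat_sum[OF B S r s] index_mult_mat_sum[OF B f_carrier[OF unit_mat_carrier] r t] s
    by (simp add: S_def)
  also have "\<dots> = z * f (C * unit_mat n s 0) $$ (r, t)"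
    using f_equivariant[OF unit_mat_carrier] f_carrier[OF mult_carrier_mat[OF C unit_mat_carrier[of n s 0]]] r t
    by (simp add: carrier_matD)
  also have "f (C * unit_mat n s 0) $$ (r, t) = (\<Sum>k<n. C $$ (k, s) * f (unit_mat n k 0) $$ (r, t))"
    unfolding mult_unit_mat_eq_lincomb[OF C s] f_linear using r t by simp
  also have "z * \<dots> = (z \<cdot>\<^sub>m (S * C)) $$ (r, s)"
    using index_mult_mat_sum[OF S C r s] r s C by (simp add: S_def mult.commute)
  finally show "(B * S) $$ (r, s) = (z \<cdot>\<^sub>m (S * C)) $$ (r, s)" .
qed (use B C in \<open>auto simp: S_def\<close>)

lemma intertwiner_similarity:
  fixes B C S T :: "complex mat"
  assumes B: "B \<in> carrier_mat n n" and C: "C \<in> carrier_mat n n"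
    and S: "S \<in> carrier_mat n n" and T: "T \<in> carrier_mat n n" and ST: "S * T = 1\<^sub>m n"
    and inter: "B * S = z \<cdot>\<^sub>m (S * C)"
  shows "B = z \<cdot>\<^sub>m (S * C * T)"
proof -
  have "B = B * S * T" using B S T ST right_mult_one_mat[OF B] by simp
  also have "\<dots> = z \<cdot>\<^sub>m (S * C * T)"
    unfolding inter by (rule mult_smult_assoc_mat) (use S C T in auto)
  finally show ?thesis .
qed

lemma similar_word_prod:
  assumes A: "\<forall>i<N. A i \<in> carrier_mat n n" and At: "\<forall>i<N. At i \<in> carrier_mat n n"
    and M: "M \<in> carrier_mat n n" and Minv: "Minv \<in> carrier_mat n n"
    and inv: "Minv * M = 1\<^sub>m n" "M * Minv = 1\<^sub>m n"
    and sim: "\<forall>i<N. A i = z \<cdot>\<^sub>m (Minv * At i * M)" and w: "set w \<subseteq> {..<N}"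
  shows "word_prod n A w = z ^ length w \<cdot>\<^sub>m (Minv * word_prod n At w * M)"
proof -
  have "A i * Minv = z \<cdot>\<^sub>m (Minv * At i)" if i: "i < N" for i
  proof -
    have Ati: "At i \<in> carrier_mat n n" using At i by simp
    have "A i * Minv = z \<cdot>\<^sub>m (Minv * At i * M * Minv)"
      using sim i Ati M Minv by (simp add: mult_smult_assoc_mat[of _ n n _ n])
    also have "Minv * At i * M * Minv = Minv * At i * (M * Minv)"
      using Ati M Minv by (meson assoc_mult_mat mult_carrier_mat)
    finally show ?thesis using inv(2) Ati Minv by simp
  qed
  then have "word_prod n A w * Minv = z ^ length w \<cdot>\<^sub>m (Minv * word_prod n At w)"
    using intertwine_word_prod[OF A At Minv _ w] by blast
  moreover have "word_prod n A w = word_prod n A w * Minv * M"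
    using word_prod_carrier[OF A w] M Minv inv by simp
  ultimately show ?thesis
    using mult_smult_assoc_mat[OF mult_carrier_mat[OF Minv word_prod_carrier[OF At w]] M] by simp
qed

lemma mat_tr_similar_word_prod:
  assumes A: "\<forall>i<N. A i \<in> carrier_mat n n" and At: "\<forall>i<N. At i \<in> carrier_mat n n"
    and M: "M \<in> carrier_mat n n" and Minv: "Minv \<in> carrier_mat n n"
    and inv: "Minv * M = 1\<^sub>m n" "M * Minv = 1\<^sub>m n"
    and sim: "\<forall>i<N. A i = z \<cdot>\<^sub>m (Minv * At i * M)" and w: "set w \<subseteq> {..<N}"
  shows "mat_tr (word_prod n A w) = z ^ length w * mat_tr (word_prod n At w)"
proof -
  have W: "word_prod n At w \<in> carrier_mat n n" using word_prod_carrier[OF At w] .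
  then have "Minv * word_prod n At w * M \<in> carrier_mat n n" using M Minv by simp
  then show ?thesis
    using similar_word_prod[OF assms] mat_tr_smult mat_tr_similar[OF W M Minv inv(2)] by simp
qed

section \<open>Traces equal up to phases\<close>

definition phase_traces :: "nat \<Rightarrow> nat \<Rightarrow> (nat \<Rightarrow> complex mat) \<Rightarrow> (nat \<Rightarrow> complex mat) \<Rightarrow> (nat \<Rightarrow> bool) \<Rightarrow> bool" where
  "phase_traces n N A At P \<longleftrightarrow> (\<forall>L. P L \<longrightarrow> (\<exists>\<alpha>::real. \<forall>w. length w = L \<and> set w \<subseteq> {..<N} \<longrightarrow>
      mat_tr (word_prod n A w) = exp (\<i> * complex_of_real \<alpha>) * mat_tr (word_prod n At w)))"

definition similar_up_to_phase :: "nat \<Rightarrow> nat \<Rightarrow> (nat \<Rightarrow> complex mat) \<Rightarrow> (nat \<Rightarrow> complex mat) \<Rightarrow> bool" where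
  "similar_up_to_phase n N A At \<longleftrightarrow> (\<exists>M Minv z. M \<in> carrier_mat n n \<and> Minv \<in> carrier_mat n n \<and>
      inverts_mat M Minv \<and> inverts_mat Minv M \<and> cmod z = 1 \<and> (\<forall>i<N. A i = z \<cdot>\<^sub>m (Minv * At i * M)))"

lemma phase_tracesD:
  assumes "phase_traces n N A At P" and "P L"
  obtains \<kappa> where "cmod \<kappa> = 1"
    "\<forall>w\<in>words N L. mat_tr (word_prod n A w) = \<kappa> * mat_tr (word_prod n At w)"
proof -
  obtain \<alpha> :: real where \<alpha>: "\<forall>w\<in>words N L. mat_tr (word_prod n A w) = exp (\<i> * complex_of_real \<alpha>) * mat_tr (word_prod n At w)"
    using assms unfolding phase_traces_def words_def by blast
  have "cmod (exp (\<i> * complex_of_real \<alpha>)) = 1" by (metis cis_conv_exp norm_cis)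
  with \<alpha> show ?thesis by (intro that[of "exp (\<i> * complex_of_real \<alpha>)"]) auto
qed

lemma phase_traces_sym:
  assumes "phase_traces n N A At P"
  shows "phase_traces n N At A P"
  unfolding phase_traces_def
proof (intro allI impI)
  fix L assume "P L"
  then obtain \<alpha> :: real where \<alpha>: "\<forall>w. length w = L \<and> set w \<subseteq> {..<N} \<longrightarrow>
      mat_tr (word_prod n A w) = exp (\<i> * complex_of_real \<alpha>) * mat_tr (word_prod n At w)"
    using assms unfolding phase_traces_def by blast
  have inverse: "exp (\<i> * complex_of_real (- \<alpha>)) * exp (\<i> * complex_of_real \<alpha>) = 1"
    by (simp flip: exp_add)
  have "mat_tr (word_prod n At w) = exp (\<i> * complex_of_real (- \<alpha>)) * mat_tr (word_prod n A w)"
    if "length w = L \<and> set w \<subseteq> {..<N}" for w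
    using \<alpha> that inverse by (simp add: mult.assoc[symmetric])
  then show "\<exists>\<beta>::real. \<forall>w. length w = L \<and> set w \<subseteq> {..<N} \<longrightarrow>
      mat_tr (word_prod n At w) = exp (\<i> * complex_of_real \<beta>) * mat_tr (word_prod n A w)"
    by blast
qed

lemma unimodular_eq_exp:
  assumes "cmod u = 1" shows "\<exists>\<alpha>::real. u = exp (\<i> * complex_of_real \<alpha>)"
proof -
  have "u \<noteq> 0" using assms by auto
  then have "exp (\<i> * complex_of_real (Arg u)) = sgn u" using cis_Arg by (simp add: cis_conv_exp)
  also have "\<dots> = u" using assms by (simp add: sgn_eq)
  finally show ?thesis by metis
qed

lemma norm_eq_1_of_power:
  assumes "cmod (z ^ m) = 1" and "m \<ge> 1" shows "cmod z = 1"
  using assms power_eq_iff_eq_base[of m "cmod z" 1] by (simp add: norm_power)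

lemma similar_imp_phase_traces:
  assumes A: "\<forall>i<N. A i \<in> carrier_mat n n" and At: "\<forall>i<N. At i \<in> carrier_mat n n"
    and "similar_up_to_phase n N A At"
  shows "phase_traces n N A At P"
proof -
  obtain M Minv z where M: "M \<in> carrier_mat n n" and Minv: "Minv \<in> carrier_mat n n"
    and inv: "Minv * M = 1\<^sub>m n" "M * Minv = 1\<^sub>m n" and z: "cmod z = 1"
    and sim: "\<forall>i<N. A i = z \<cdot>\<^sub>m (Minv * At i * M)"
    using assms(3) unfolding similar_up_to_phase_def inverts_mat_def by auto
  have "\<exists>\<alpha>::real. \<forall>w. length w = L \<and> set w \<subseteq> {..<N} \<longrightarrow>
      mat_tr (word_prod n A w) = exp (\<i> * complex_of_real \<alpha>) * mat_tr (word_prod n At w)" for L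
  proof -
    obtain \<alpha> :: real where "z ^ L = exp (\<i> * complex_of_real \<alpha>)"
      using unimodular_eq_exp[of "z ^ L"] z by (auto simp: norm_power)
    with mat_tr_similar_word_prod[OF A At M Minv inv sim] show ?thesis by auto
  qed
  then show ?thesis unfolding phase_traces_def by blast
qed

lemma trace_scaling_unique:
  assumes B: "\<forall>i<N. B i \<in> carrier_mat n n" and C: "\<forall>i<N. C i \<in> carrier_mat n n"
    and n: "n \<ge> 1" and span: "spans_words n N B m"
    and \<kappa>: "\<forall>w\<in>words N m. mat_tr (word_prod n C w) = \<kappa> * mat_tr (word_prod n B w)"
    and \<kappa>': "\<forall>w\<in>words N m. mat_tr (word_prod n C w) = \<kappa>' * mat_tr (word_prod n B w)"
  shows "\<kappa> = \<kappa>'"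
proof -
  obtain c where c: "1\<^sub>m n = word_comb n N B m c"
    using span one_carrier_mat unfolding spans_words_def by blast
  have "\<kappa> * of_nat n = mat_tr (word_comb n N C m c)"
    using mat_tr_word_comb_scaled[OF B C \<kappa>, of c] unfolding c[symmetric] by simp
  also have "\<dots> = \<kappa>' * of_nat n"
    using mat_tr_word_comb_scaled[OF B C \<kappa>', of c] unfolding c[symmetric] by simp
  finally show ?thesis using n by simp
qed

section \<open>Transferring combinations of words\<close>

definition comb_related :: "nat \<Rightarrow> nat \<Rightarrow> (nat \<Rightarrow> complex mat) \<Rightarrow> (nat \<Rightarrow> complex mat) \<Rightarrow> nat \<Rightarrow>
    complex mat \<Rightarrow> complex mat \<Rightarrow> bool" where
  "comb_related n N B C m X Y \<longleftrightarrow> (\<exists>c. X = word_comb n N B m c \<and> Y = word_comb n N C m c)"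

lemma comb_related_carrier:
  "comb_related n N B C m X Y \<Longrightarrow> X \<in> carrier_mat n n \<and> Y \<in> carrier_mat n n"
  unfolding comb_related_def by auto

lemma comb_related_sym: "comb_related n N B C m X Y \<Longrightarrow> comb_related n N C B m Y X"
  unfolding comb_related_def by blast

lemma comb_related_word_comb: "comb_related n N B C m (word_comb n N B m c) (word_comb n N C m c)"
  unfolding comb_related_def by blast

lemma comb_related_word_prod:
  assumes "\<forall>i<N. B i \<in> carrier_mat n n" and "\<forall>i<N. C i \<in> carrier_mat n n" and "w \<in> words N m"
  shows "comb_related n N B C m (word_prod n B w) (word_prod n C w)"
  unfolding comb_related_def using word_prod_eq_word_comb assms by blast

lemma comb_related_mult:
  assumes B: "\<forall>i<N. B i \<in> carrier_mat n n" and C: "\<forall>i<N. C i \<in> carrier_mat n n"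
    and "comb_related n N B C a X Y" and "comb_related n N B C b X' Y'"
  shows "comb_related n N B C (a + b) (X * X') (Y * Y')"
  using assms(3,4) unfolding comb_related_def by (auto simp: word_comb_mult[OF B] word_comb_mult[OF C])

lemma comb_related_diff:
  assumes "comb_related n N B C m X Y" and "comb_related n N B C m X' Y'"
  shows "comb_related n N B C m (X - X') (Y - Y')"
  using assms unfolding comb_related_def word_comb_def by (auto simp: mat_lincomb_diff)

lemma comb_related_lincomb:
  assumes "\<And>k. k \<in> K \<Longrightarrow> comb_related n N B C m (F k) (G k)"
  shows "comb_related n N B C m (mat_lincomb n K a F) (mat_lincomb n K a G)"
proof -
  obtain c where c: "\<And>k. k \<in> K \<Longrightarrow> F k = word_comb n N B m (c k) \<and> G k = word_comb n N C m (c k)"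
  proof -
    have "\<forall>k\<in>K. \<exists>c. F k = word_comb n N B m c \<and> G k = word_comb n N C m c"
      using assms unfolding comb_related_def by blast
    then show ?thesis using that by (metis bchoice)
  qed
  have "mat_lincomb n K a F = word_comb n N B m (\<lambda>v. \<Sum>k\<in>K. a k * c k v)"
    using mat_lincomb_cong[OF refl, of K F "\<lambda>k. word_comb n N B m (c k)"] c
    by (simp add: word_comb_def mat_lincomb_lincomb)
  moreover have "mat_lincomb n K a G = word_comb n N C m (\<lambda>v. \<Sum>k\<in>K. a k * c k v)"
    using mat_lincomb_cong[OF refl, of K G "\<lambda>k. word_comb n N C m (c k)"] c
    by (simp add: word_comb_def mat_lincomb_lincomb)
  ultimately show ?thesis unfolding comb_related_def by blast
qed

text \<open>Multiplying by an arbitrary related pair of length \<open>K\<close> and comparing traces at length \<open>K + m\<close>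
  shows that \<open>Y\<close> is trace-orthogonal to all of \<open>M\<^sub>n\<close>.\<close>

lemma comb_related_zero:
  assumes B: "\<forall>i<N. B i \<in> carrier_mat n n" and C: "\<forall>i<N. C i \<in> carrier_mat n n"
    and traces: "phase_traces n N C B P" and span: "spans_words n N C K" and P: "P (K + m)"
    and rel: "comb_related n N B C m (0\<^sub>m n n) Y"
  shows "Y = 0\<^sub>m n n"
proof -
  obtain \<kappa> where \<kappa>: "\<forall>w\<in>words N (K + m). mat_tr (word_prod n C w) = \<kappa> * mat_tr (word_prod n B w)"
    using phase_tracesD[OF traces P] by metis
  have Y: "Y \<in> carrier_mat n n" using comb_related_carrier[OF rel] by blast
  show ?thesis
  proof (rule trace_form_nondegenerate[OF Y])
    fix X :: "complex mat" assume "X \<in> carrier_mat n n"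
    then obtain d where X: "X = word_comb n N C K d" using span unfolding spans_words_def by blast
    have "comb_related n N B C (K + m) (word_comb n N B K d * 0\<^sub>m n n) (X * Y)"
      unfolding X by (rule comb_related_mult[OF B C comb_related_word_comb rel])
    then obtain c where c: "word_comb n N B (K + m) c = 0\<^sub>m n n" "X * Y = word_comb n N C (K + m) c"
      unfolding comb_related_def by auto
    show "mat_tr (X * Y) = 0"
      using mat_tr_word_comb_scaled[OF B C \<kappa>, of c] unfolding c by simp
  qed
qed

lemma comb_related_unique:
  assumes B: "\<forall>i<N. B i \<in> carrier_mat n n" and C: "\<forall>i<N. C i \<in> carrier_mat n n"
    and traces: "phase_traces n N C B P" and span: "spans_words n N C K" and P: "P (K + m)"
    and rel: "comb_related n N B C m X Y" and rel': "comb_related n N B C m X Y'"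
  shows "Y = Y'"
proof -
  have X: "X \<in> carrier_mat n n" and Y: "Y \<in> carrier_mat n n" and Y': "Y' \<in> carrier_mat n n"
    using comb_related_carrier[OF rel] comb_related_carrier[OF rel'] by auto
  have "comb_related n N B C m (0\<^sub>m n n) (Y - Y')"
    using comb_related_diff[OF rel rel'] X by simp
  then have "Y - Y' = 0\<^sub>m n n" by (rule comb_related_zero[OF B C traces span P])
  show ?thesis
  proof (rule eq_matI)
    fix i j assume "i < dim_row Y'" "j < dim_col Y'"
    then show "Y $$ (i, j) = Y' $$ (i, j)"
      using \<open>Y - Y' = 0\<^sub>m n n\<close> Y Y' by (metis carrier_matD index_minus_mat(1) index_zero_mat(1) right_minus_eq)
  qed (use Y Y' in auto)
qed

locale phase_equivalent_tuples =
  fixes n N :: nat and A At :: "nat \<Rightarrow> complex mat" and P :: "nat \<Rightarrow> bool" and l :: nat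
  assumes A_dim: "\<forall>i<N. A i \<in> carrier_mat n n" and At_dim: "\<forall>i<N. At i \<in> carrier_mat n n"
    and n_pos: "n \<ge> 1" and l_pos: "l \<ge> 1"
    and spans_A: "\<And>m. l \<le> m \<Longrightarrow> spans_words n N A m"
    and spans_At: "\<And>m. l \<le> m \<Longrightarrow> spans_words n N At m"
    and traces: "phase_traces n N A At P"
    and P_cover: "\<And>m. m \<ge> 1 \<Longrightarrow> P m \<or> P (Suc m)"
begin

abbreviation related :: "nat \<Rightarrow> complex mat \<Rightarrow> complex mat \<Rightarrow> bool" where
  "related \<equiv> comb_related n N At A"

lemma P_shift: "P (l + m) \<or> P (Suc l + m)"
  using P_cover[of "l + m"] l_pos by simp

lemma related_unique:
  assumes "related m X Y" and "related m X Y'" shows "Y = Y'"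
  using P_shift
proof
  assume "P (l + m)"
  then show ?thesis by (rule comb_related_unique[OF At_dim A_dim traces spans_A[OF order_refl] _ assms])
next
  assume "P (Suc l + m)"
  then show ?thesis by (rule comb_related_unique[OF At_dim A_dim traces spans_A[OF le_SucI[OF order_refl]] _ assms])
qed

lemma related_unique_left:
  assumes "related m X Y" and "related m X' Y" shows "X = X'"
proof -
  note sym = comb_related_sym[OF assms(1)] comb_related_sym[OF assms(2)]
  note traces' = phase_traces_sym[OF traces]
  from P_shift show ?thesis
  proof
    assume "P (l + m)"
    then show ?thesis by (rule comb_related_unique[OF A_dim At_dim traces' spans_At[OF order_refl] _ sym])
  next
    assume "P (Suc l + m)"
    then show ?thesis by (rule comb_related_unique[OF A_dim At_dim traces' spans_At[OF le_SucI[OF order_refl]] _ sym])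
  qed
qed

lemma related_exists: "l \<le> m \<Longrightarrow> X \<in> carrier_mat n n \<Longrightarrow> \<exists>Y. related m X Y"
  using spans_At unfolding spans_words_def comb_related_def by blast

lemma related_exists_left: "l \<le> m \<Longrightarrow> Y \<in> carrier_mat n n \<Longrightarrow> \<exists>X. related m X Y"
  using spans_A unfolding spans_words_def comb_related_def by blast

definition transfer :: "nat \<Rightarrow> complex mat \<Rightarrow> complex mat" where
  "transfer m X = (SOME Y. related m X Y)"

lemma related_transfer: "l \<le> m \<Longrightarrow> X \<in> carrier_mat n n \<Longrightarrow> related m X (transfer m X)"
  unfolding transfer_def by (rule someI_ex) (rule related_exists)

lemma transfer_eqI:
  assumes "related m X Y" shows "transfer m X = Y"
proof -
  have "related m X (transfer m X)" unfolding transfer_def by (rule someI) (rule assms)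
  from this assms show ?thesis by (rule related_unique)
qed

lemma transfer_carrier: "l \<le> m \<Longrightarrow> X \<in> carrier_mat n n \<Longrightarrow> transfer m X \<in> carrier_mat n n"
  using related_transfer comb_related_carrier by blast

lemma transfer_surj:
  "l \<le> m \<Longrightarrow> Y \<in> carrier_mat n n \<Longrightarrow> \<exists>X\<in>carrier_mat n n. transfer m X = Y"
proof -
  assume "l \<le> m" "Y \<in> carrier_mat n n"
  then obtain X where "related m X Y" using related_exists_left by blast
  then show ?thesis using transfer_eqI comb_related_carrier by blast
qed

lemma transfer_lincomb:
  assumes "\<And>k. k \<in> K \<Longrightarrow> F k \<in> carrier_mat n n"
  shows "transfer l (mat_lincomb n K a F) = mat_lincomb n K a (\<lambda>k. transfer l (F k))"
  using assms by (intro transfer_eqI comb_related_lincomb related_transfer) auto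

lemma transfer_mult:
  assumes "related a X Y" and "X' \<in> carrier_mat n n" and "l \<le> b"
  shows "transfer (a + b) (X * X') = Y * transfer b X'"
  by (intro transfer_eqI comb_related_mult[OF At_dim A_dim assms(1)] related_transfer assms(2,3))

text \<open>Comparing \<open>Y\<^sub>0 X\<close> and \<open>X Y\<^sub>0\<close>, where \<open>Y\<^sub>0\<close> is transferred to \<open>1\<close> at length \<open>l\<close>,
  shows that the step from length \<open>l\<close> to \<open>l + 1\<close> is multiplication by a central element.\<close>

lemma transfer_Suc_central:
  obtains H where "H \<in> carrier_mat n n"
    and "\<And>X. X \<in> carrier_mat n n \<Longrightarrow> transfer (Suc l) X = H * transfer l X"
    and "\<And>X. X \<in> carrier_mat n n \<Longrightarrow> transfer (Suc l) X = transfer l X * H"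
proof -
  obtain Y0 where Y0: "related l Y0 (1\<^sub>m n)" using related_exists_left[of l "1\<^sub>m n"] by auto
  have Y0_carrier: "Y0 \<in> carrier_mat n n" using comb_related_carrier[OF Y0] by blast
  define H where "H = transfer (Suc l) Y0"
  have left: "transfer (Suc l) X = H * transfer l X" if X: "X \<in> carrier_mat n n" for X
  proof -
    have "transfer (Suc l + l) (Y0 * X) = H * transfer l X"
      unfolding H_def by (rule transfer_mult[OF related_transfer X]) (use Y0_carrier in auto)
    moreover have "transfer (l + Suc l) (Y0 * X) = transfer (Suc l) X"
      using transfer_mult[OF Y0 X, of "Suc l"] transfer_carrier[OF _ X, of "Suc l"] by simp
    ultimately show ?thesis by (simp add: add.commute)
  qed
  have right: "transfer (Suc l) X = transfer l X * H" if X: "X \<in> carrier_mat n n" for X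
  proof -
    have "transfer (Suc l + l) (X * Y0) = transfer (Suc l) X"
      using transfer_mult[OF related_transfer[OF _ X] Y0_carrier, of "Suc l" l] transfer_eqI[OF Y0]
        transfer_carrier[OF _ X, of "Suc l"] by simp
    moreover have "transfer (l + Suc l) (X * Y0) = transfer l X * H"
      unfolding H_def by (rule transfer_mult[OF related_transfer[OF _ X] Y0_carrier]) simp_all
    ultimately show ?thesis by (simp add: add.commute)
  qed
  have "H \<in> carrier_mat n n" unfolding H_def using transfer_carrier[OF _ Y0_carrier] by simp
  from that[OF this left right] show ?thesis .
qed

lemma transfer_Suc_scalar: "\<exists>z. z \<noteq> 0 \<and> (\<forall>X\<in>carrier_mat n n. transfer (Suc l) X = z \<cdot>\<^sub>m transfer l X)"
proof -
  obtain H where H: "H \<in> carrier_mat n n"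
    and H_left: "\<And>X. X \<in> carrier_mat n n \<Longrightarrow> transfer (Suc l) X = H * transfer l X"
    and H_right: "\<And>X. X \<in> carrier_mat n n \<Longrightarrow> transfer (Suc l) X = transfer l X * H"
    using transfer_Suc_central by blast
  have "H * Z = Z * H" if Z: "Z \<in> carrier_mat n n" for Z
  proof -
    obtain X where "X \<in> carrier_mat n n" "transfer l X = Z" using transfer_surj[OF _ Z] by blast
    then show ?thesis using H_left H_right by metis
  qed
  then have "H = H $$ (0, 0) \<cdot>\<^sub>m 1\<^sub>m n" by (rule commuting_mat_is_scalar[OF n_pos H])
  then obtain c where H_eq: "H = c \<cdot>\<^sub>m 1\<^sub>m n" by blast
  have scaled: "transfer (Suc l) X = c \<cdot>\<^sub>m transfer l X" if X: "X \<in> carrier_mat n n" for X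
    using H_left[OF X] transfer_carrier[OF _ X, of l]
      mult_smult_assoc_mat[OF one_carrier_mat, of "transfer l X" n n c] by (simp add: H_eq)
  moreover have "c \<noteq> 0"
  proof
    assume "c = 0"
    obtain X1 where X1: "X1 \<in> carrier_mat n n" "transfer (Suc l) X1 = 1\<^sub>m n"
      using transfer_surj[of "Suc l" "1\<^sub>m n"] by auto
    then have "1\<^sub>m n = c \<cdot>\<^sub>m transfer l X1" using scaled by simp
    then have "(1\<^sub>m n :: complex mat) $$ (0, 0) = (c \<cdot>\<^sub>m transfer l X1) $$ (0, 0)" by simp
    then show False using \<open>c = 0\<close> n_pos transfer_carrier[OF _ X1(1), of l] by simp
  qed
  ultimately show ?thesis by blast
qed

definition phase :: complex where
  "phase = (SOME z. z \<noteq> 0 \<and> (\<forall>X\<in>carrier_mat n n. transfer (Suc l) X = z \<cdot>\<^sub>m transfer l X))"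

lemma phase_nonzero: "phase \<noteq> 0"
  and transfer_Suc: "X \<in> carrier_mat n n \<Longrightarrow> transfer (Suc l) X = phase \<cdot>\<^sub>m transfer l X"
  using someI_ex[OF transfer_Suc_scalar] unfolding phase_def by blast+

lemma transfer_equivariant:
  assumes X: "X \<in> carrier_mat n n" and i: "i < N"
  shows "A i * transfer l X = phase \<cdot>\<^sub>m transfer l (At i * X)"
proof -
  have "related 1 (word_prod n At [i]) (word_prod n A [i])"
    using i by (intro comb_related_word_prod[OF At_dim A_dim]) (simp add: words_def)
  moreover have "At i \<in> carrier_mat n n" "A i \<in> carrier_mat n n" using A_dim At_dim i by auto
  ultimately have "related 1 (At i) (A i)" by simp
  from transfer_mult[OF this X order_refl] have "transfer (Suc l) (At i * X) = A i * transfer l X"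
    by simp
  moreover have "At i * X \<in> carrier_mat n n" by (rule mult_carrier_mat) (use At_dim X i in auto)
  ultimately show ?thesis using transfer_Suc by simp
qed

lemma intertwiner_exists: "\<exists>S\<in>carrier_mat n n. S \<noteq> 0\<^sub>m n n \<and> (\<forall>i<N. A i * S = phase \<cdot>\<^sub>m (S * At i))"
proof -
  have "transfer l (unit_mat n 0 0) \<noteq> 0\<^sub>m n n"
  proof
    assume "transfer l (unit_mat n 0 0) = 0\<^sub>m n n"
    then have "related l (unit_mat n 0 0) (0\<^sub>m n n)"
      using related_transfer[OF order_refl, of "unit_mat n 0 0"] by simp
    moreover have "related l (0\<^sub>m n n) (0\<^sub>m n n)"
      using comb_related_word_comb[of n N At A l "\<lambda>_. 0"] by (simp add: word_comb_zero)
    ultimately have "unit_mat n 0 0 = 0\<^sub>m n n" by (rule related_unique_left)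
    then have "unit_mat n 0 0 $$ (0, 0) = (0\<^sub>m n n :: complex mat) $$ (0, 0)" by simp
    then show False using n_pos by (simp add: unit_mat_def)
  qed
  then obtain a t where a: "a < n" and t: "t < n" and nonzero: "transfer l (unit_mat n 0 0) $$ (a, t) \<noteq> 0"
    using transfer_carrier[OF order_refl unit_mat_carrier] by (metis carrier_matD eq_matI index_zero_mat(1,2,3))
  define S where "S = mat n n (\<lambda>(r, s). transfer l (unit_mat n s 0) $$ (r, t))"
  have "A i * S = phase \<cdot>\<^sub>m (S * At i)" if i: "i < N" for i
    unfolding S_def
  proof (rule intertwiner_of_equivariant_map[OF _ _ t])
    show "A i \<in> carrier_mat n n" "At i \<in> carrier_mat n n" using i A_dim At_dim by auto
  qed (auto intro: transfer_carrier transfer_lincomb transfer_equivariant[OF _ i])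
  moreover have "S \<noteq> 0\<^sub>m n n"
  proof
    assume "S = 0\<^sub>m n n"
    then have "S $$ (a, 0) = 0" using a n_pos by simp
    then show False using nonzero a n_pos by (simp add: S_def)
  qed
  moreover have "S \<in> carrier_mat n n" by (simp add: S_def)
  ultimately show ?thesis by blast
qed

lemma similarity: "similar_up_to_phase n N A At"
proof -
  obtain S where S: "S \<in> carrier_mat n n" and S_nonzero: "S \<noteq> 0\<^sub>m n n"
    and inter: "\<forall>i<N. A i * S = phase \<cdot>\<^sub>m (S * At i)"
    using intertwiner_exists by blast
  obtain T where T: "T \<in> carrier_mat n n" and TS: "T * S = 1\<^sub>m n" and ST: "S * T = 1\<^sub>m n"
    using intertwiner_invertible[OF A_dim At_dim S inter phase_nonzero S_nonzero spans_At[OF order_refl]]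
    by blast
  have sim: "\<forall>i<N. A i = phase \<cdot>\<^sub>m (S * At i * T)"
  proof (intro allI impI)
    fix i assume "i < N"
    then show "A i = phase \<cdot>\<^sub>m (S * At i * T)"
      by (intro intertwiner_similarity[OF _ _ S T ST]) (use inter A_dim At_dim in auto)
  qed
  obtain m where m: "l \<le> m" "P m"
  proof (cases "P l")
    case False
    then have "P (Suc l)" using P_cover[OF l_pos] by simp
    then show ?thesis by (rule that[OF le_SucI[OF order_refl]])
  qed (rule that[OF order_refl])
  obtain \<kappa> where "cmod \<kappa> = 1"
    and \<kappa>: "\<forall>w\<in>words N m. mat_tr (word_prod n A w) = \<kappa> * mat_tr (word_prod n At w)"
    by (rule phase_tracesD[OF traces m(2)])
  have "\<forall>w\<in>words N m. mat_tr (word_prod n A w) = phase ^ m * mat_tr (word_prod n At w)"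
    using mat_tr_similar_word_prod[OF A_dim At_dim T S ST TS sim] by (auto simp: words_def)
  then have "phase ^ m = \<kappa>"
    by (rule trace_scaling_unique[OF At_dim A_dim n_pos spans_At[OF m(1)] _ \<kappa>])
  with \<open>cmod \<kappa> = 1\<close> have "cmod (phase ^ m) = 1" by simp
  then have "cmod phase = 1" by (rule norm_eq_1_of_power) (use m(1) l_pos in simp)
  then show ?thesis
    unfolding similar_up_to_phase_def inverts_mat_def
    by (intro exI[of _ T] exI[of _ S] exI[of _ phase]) (use S T ST TS sim in auto)
qed

end

section \<open>Similarity up to a phase\<close>

lemma injective_tuple_eventually_spans_words:
  assumes B: "\<forall>i<N. B i \<in> carrier_mat n n" and inj: "injective_tuple n N B"
  obtains l where "l \<ge> 1" and "\<And>m. l \<le> m \<Longrightarrow> spans_words n N B m"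
proof -
  obtain l where l: "l \<ge> 1" "spans_words n N B l" using injective_tuple_spans_words[OF B inj] by blast
  show ?thesis
  proof (rule that[OF l(1)])
    fix m assume "l \<le> m"
    then show "spans_words n N B m" by (rule spans_words_mono[OF B l(2) l(1)])
  qed
qed

lemma phase_traces_iff_similar:
  assumes A: "\<forall>i<N. A i \<in> carrier_mat n n" and At: "\<forall>i<N. At i \<in> carrier_mat n n"
    and n_pos: "n \<ge> 1" and A_inj: "injective_tuple n N A" and At_inj: "injective_tuple n N At"
    and P_cover: "\<And>m. m \<ge> 1 \<Longrightarrow> P m \<or> P (Suc m)"
  shows "phase_traces n N A At P \<longleftrightarrow> similar_up_to_phase n N A At"
proof
  assume traces: "phase_traces n N A At P"
  obtain l1 where l1: "l1 \<ge> 1" "\<And>m. l1 \<le> m \<Longrightarrow> spans_words n N A m"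
    using injective_tuple_eventually_spans_words[OF A A_inj] by blast
  obtain l2 where l2: "\<And>m. l2 \<le> m \<Longrightarrow> spans_words n N At m"
    using injective_tuple_eventually_spans_words[OF At At_inj] by blast
  have "spans_words n N A m" "spans_words n N At m" if "max l1 l2 \<le> m" for m
    using l1(2) l2 that by simp_all
  then interpret phase_equivalent_tuples n N A At P "max l1 l2"
    using A At n_pos l1(1) traces P_cover by unfold_locales simp_all
  show "similar_up_to_phase n N A At" by (rule similarity)
qed (rule similar_imp_phase_traces[OF A At])

lemma conjugates_eq_imp_commute:
  fixes X M Minv M' Minv' :: "complex mat"
  assumes X: "X \<in> carrier_mat n n" and M: "M \<in> carrier_mat n n" and Minv: "Minv \<in> carrier_mat n n"
    and M': "M' \<in> carrier_mat n n" and Minv': "Minv' \<in> carrier_mat n n"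
    and inv: "M * Minv = 1\<^sub>m n" and inv': "M' * Minv' = 1\<^sub>m n"
    and eq: "Minv * X * M = Minv' * X * M'"
  shows "X * (M * Minv') = (M * Minv') * X"
proof -
  have XMM': "X * (M * Minv') \<in> carrier_mat n n" using X M Minv' by simp
  have "X * (M * Minv') = M * Minv * (X * (M * Minv'))" using inv left_mult_one_mat[OF XMM'] by simp
  also have "\<dots> = M * ((Minv * X * M) * Minv')"
    using M Minv X Minv' by (simp add: assoc_mult_mat[of _ n n _ n _ n])
  also have "\<dots> = M * (Minv' * X * (M' * Minv'))"
    unfolding eq using M' Minv' X by (simp add: assoc_mult_mat[of _ n n _ n _ n])
  also have "\<dots> = (M * Minv') * X"
    using inv' M Minv' X by (simp add: assoc_mult_mat[of _ n n _ n _ n])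
  finally show ?thesis .
qed

lemma conjugator_unique_up_to_scalar:
  assumes At: "\<forall>i<N. At i \<in> carrier_mat n n" and n_pos: "n \<ge> 1" and span: "spans_words n N At m"
    and M: "M \<in> carrier_mat n n" and Minv: "Minv \<in> carrier_mat n n" and inv: "M * Minv = 1\<^sub>m n"
    and M': "M' \<in> carrier_mat n n" and Minv': "Minv' \<in> carrier_mat n n"
    and inv': "Minv' * M' = 1\<^sub>m n" "M' * Minv' = 1\<^sub>m n"
    and conj: "\<forall>i<N. Minv * At i * M = Minv' * At i * M'"
  shows "\<exists>c. c \<noteq> 0 \<and> M' = c \<cdot>\<^sub>m M"
proof -
  define Q where "Q = M * Minv'"
  have Q: "Q \<in> carrier_mat n n" unfolding Q_def using M Minv' by simp
  have "\<forall>i<N. At i * Q = Q * At i"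
    unfolding Q_def using At conj by (auto intro: conjugates_eq_imp_commute[OF _ M Minv M' Minv' inv inv'(2)])
  then have "Q = Q $$ (0, 0) \<cdot>\<^sub>m 1\<^sub>m n"
    by (intro commute_tuple_imp_scalar[OF n_pos At Q _ span]) auto
  then obtain q where Q_eq: "Q = q \<cdot>\<^sub>m 1\<^sub>m n" by blast
  have "M = Q * M'" unfolding Q_def using M Minv' M' inv'(1) by (simp flip: assoc_mult_mat[of _ n n _ n _ n])
  then have M_eq: "M = q \<cdot>\<^sub>m M'" using M' by (simp add: Q_eq mult_smult_assoc_mat[of _ n n _ n])
  have "q \<noteq> 0"
  proof
    assume "q = 0"
    then have "(1\<^sub>m n :: complex mat) $$ (0, 0) = (q \<cdot>\<^sub>m (M' * Minv)) $$ (0, 0)"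
      using inv M_eq M' Minv by (simp add: mult_smult_assoc_mat[of _ n n _ n])
    then show False using \<open>q = 0\<close> n_pos M' Minv by simp
  qed
  moreover have "M' = inverse q \<cdot>\<^sub>m M" using M_eq \<open>q \<noteq> 0\<close> by (simp add: smult_smult_mat)
  ultimately show ?thesis by (intro exI[of _ "inverse q"]) simp
qed

lemma similar_up_to_phase_unique:
  assumes A: "\<forall>i<N. A i \<in> carrier_mat n n" and At: "\<forall>i<N. At i \<in> carrier_mat n n"
    and n_pos: "n \<ge> 1" and span: "spans_words n N At l" and span_Suc: "spans_words n N At (Suc l)"
    and M: "M \<in> carrier_mat n n" and Minv: "Minv \<in> carrier_mat n n"
    and inv: "inverts_mat M Minv" "inverts_mat Minv M" and "cmod z = 1"
    and sim: "\<forall>i<N. A i = z \<cdot>\<^sub>m (Minv * At i * M)"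
    and M': "M' \<in> carrier_mat n n" and Minv': "Minv' \<in> carrier_mat n n"
    and inv': "inverts_mat M' Minv'" "inverts_mat Minv' M'"
    and sim': "\<forall>i<N. A i = z' \<cdot>\<^sub>m (Minv' * At i * M')"
  shows "z' = z \<and> (\<exists>c. c \<noteq> 0 \<and> M' = c \<cdot>\<^sub>m M)"
proof -
  have inv: "Minv * M = 1\<^sub>m n" "M * Minv = 1\<^sub>m n" and inv': "Minv' * M' = 1\<^sub>m n" "M' * Minv' = 1\<^sub>m n"
    using inv inv' M Minv M' Minv' unfolding inverts_mat_def by auto
  have powers: "z ^ m = z' ^ m" if span_m: "spans_words n N At m" for m
    using mat_tr_similar_word_prod[OF A At M Minv inv sim] mat_tr_similar_word_prod[OF A At M' Minv' inv' sim']
    by (intro trace_scaling_unique[OF At A n_pos span_m]) (auto simp: words_def)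
  have z: "z \<noteq> 0" using \<open>cmod z = 1\<close> by auto
  have z_eq: "z' = z"
  proof -
    have "z * z ^ l = z' * z' ^ l" "z ^ l = z' ^ l" using powers[OF span_Suc] powers[OF span] by simp_all
    moreover have "z ^ l \<noteq> 0" using z by simp
    ultimately show ?thesis by (metis mult_cancel_right)
  qed
  have "Minv * At i * M = Minv' * At i * M'" if i: "i < N" for i
  proof -
    have "z \<cdot>\<^sub>m (Minv * At i * M) = z \<cdot>\<^sub>m (Minv' * At i * M')"
      using sim[rule_format, OF i, symmetric] sim'[rule_format, OF i] z_eq by simp
    then have "inverse z \<cdot>\<^sub>m (z \<cdot>\<^sub>m (Minv * At i * M)) = inverse z \<cdot>\<^sub>m (z \<cdot>\<^sub>m (Minv' * At i * M'))"
      by simp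
    then show ?thesis using z by (simp add: smult_smult_mat)
  qed
  with conjugator_unique_up_to_scalar[OF At n_pos span M Minv inv(2) M' Minv' inv'] z_eq show ?thesis
    by blast
qed

theorem mainTheorem6:
  fixes n N :: nat and A At :: "nat \<Rightarrow> complex mat"
  assumes n_pos: "n \<ge> 1"
    and A_dim: "\<forall>i<N. A i \<in> carrier_mat n n"
    and At_dim: "\<forall>i<N. At i \<in> carrier_mat n n"
    and A_inj: "injective_tuple n N A"
    and At_inj: "injective_tuple n N At"
  shows
    "((\<forall>L::nat. L > 0 \<and> even L \<longrightarrow>
         (\<exists>\<alpha>::real. \<forall>w. length w = L \<and> set w \<subseteq> {..<N} \<longrightarrow>
            mat_tr (word_prod n A w) = exp (\<i> * complex_of_real \<alpha>) * mat_tr (word_prod n At w)))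
      \<longleftrightarrow>
      (\<exists>M Minv z. M \<in> carrier_mat n n \<and> Minv \<in> carrier_mat n n \<and>
          inverts_mat M Minv \<and> inverts_mat Minv M \<and> cmod z = 1 \<and>
          (\<forall>i<N. A i = z \<cdot>\<^sub>m (Minv * At i * M))))
   \<and>
    ((\<forall>L::nat. odd L \<longrightarrow>
         (\<exists>\<alpha>::real. \<forall>w. length w = L \<and> set w \<subseteq> {..<N} \<longrightarrow>
            mat_tr (word_prod n A w) = exp (\<i> * complex_of_real \<alpha>) * mat_tr (word_prod n At w)))
      \<longleftrightarrow>
      (\<exists>M Minv z. M \<in> carrier_mat n n \<and> Minv \<in> carrier_mat n n \<and>
          inverts_mat M Minv \<and> inverts_mat Minv M \<and> cmod z = 1 \<and>
          (\<forall>i<N. A i = z \<cdot>\<^sub>m (Minv * At i * M))))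
   \<and>
    (\<forall>M Minv z M' Minv' z'.
        M \<in> carrier_mat n n \<and> Minv \<in> carrier_mat n n \<and>
        inverts_mat M Minv \<and> inverts_mat Minv M \<and> cmod z = 1 \<and>
        (\<forall>i<N. A i = z \<cdot>\<^sub>m (Minv * At i * M)) \<and>
        M' \<in> carrier_mat n n \<and> Minv' \<in> carrier_mat n n \<and>
        inverts_mat M' Minv' \<and> inverts_mat Minv' M' \<and> cmod z' = 1 \<and>
        (\<forall>i<N. A i = z' \<cdot>\<^sub>m (Minv' * At i * M'))
      \<longrightarrow> z' = z \<and> (\<exists>c::complex. c \<noteq> 0 \<and> M' = c \<cdot>\<^sub>m M))"
proof -
  note iff = phase_traces_iff_similar[OF A_dim At_dim n_pos A_inj At_inj]
  have even: "phase_traces n N A At (\<lambda>L. L > 0 \<and> even L) \<longleftrightarrow> similar_up_to_phase n N A At"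
    by (rule iff) simp
  have odd: "phase_traces n N A At odd \<longleftrightarrow> similar_up_to_phase n N A At"
    by (rule iff) simp
  obtain l where "\<And>m. l \<le> m \<Longrightarrow> spans_words n N At m"
    using injective_tuple_eventually_spans_words[OF At_dim At_inj] by blast
  note unique = similar_up_to_phase_unique[OF A_dim At_dim n_pos this[OF order_refl] this[OF le_SucI[OF order_refl]]]
  show ?thesis
    unfolding phase_traces_def[symmetric] similar_up_to_phase_def[symmetric]
    by (intro conjI even odd allI impI; elim conjE;
        rule unique[THEN conjunct1] unique[THEN conjunct2]; assumption)
qed

end
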